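(* Let $\Gamma$ be a connected simplicial graph which is tree-graded with respect to a collection of subgraphs $\{\Gamma_i\}_{i\in I}$, and fix a basepoint $e\in V(\Gamma)$. Then for each $x\in V(\Gamma)$ there are finite sets $I_x=\{i_0,i_1,\dots,i_k\}\subseteq I$ and $\{x_0,\dots,x_k=x\}\subseteq V(\Gamma)$ such that every geodesic $g$ from $e$ to $x$ can be decomposed as a concatenation of subgeodesics \[ g=g_0\,\overline{g_0}\,g_1\,\overline{g_1}\cdots\overline{g_{k-1}}\,g_k \] such that for each $j$: (i) $g_j\subseteq\Gamma_{i_j}$, the initial vertex of $g_j$ is $e_j$, the unique vertex of $\Gamma_{i_j}$ at minimal distance from $e_0=e$, and the terminal vertex of $g_j$ is $x_j$; and (ii) $\overline{g_j}$ has length at most $1$.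
   Context: A connected simplicial graph $\Gamma$ is tree-graded with respect to a collection $\{\Gamma_i\}_{i\in I}$ of non-empty connected subgraphs if (1) every vertex and every simple loop of $\Gamma$ is contained in some $\Gamma_i$, and (2) for $i\neq j$, $\Gamma_i\not\subseteq\Gamma_j$ and $|V(\Gamma_i)\cap V(\Gamma_j)|\leq 1$. $\Gamma$ carries the shortest path metric. *)

theory Defs
  imports Main
begin

definition simplicial_graph :: "'a set \<Rightarrow> ('a \<Rightarrow> 'a \<Rightarrow> bool) \<Rightarrow> bool" where
  "simplicial_graph V adj \<longleftrightarrow>
     (\<forall>u v. adj u v \<longrightarrow> adj v u) \<and> (\<forall>u. \<not> adj u u) \<and>
     (\<forall>u v. adj u v \<longrightarrow> u \<in> V \<and> v \<in> V)"

definition walk :: "('a \<Rightarrow> 'a \<Rightarrow> bool) \<Rightarrow> 'a list \<Rightarrow> bool" where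
  "walk adj p \<longleftrightarrow> p \<noteq> [] \<and> successively adj p"

definition connected_graph :: "'a set \<Rightarrow> ('a \<Rightarrow> 'a \<Rightarrow> bool) \<Rightarrow> bool" where
  "connected_graph V adj \<longleftrightarrow>
     (\<forall>u\<in>V. \<forall>v\<in>V. \<exists>p. walk adj p \<and> set p \<subseteq> V \<and> hd p = u \<and> last p = v)"

definition gdist :: "('a \<Rightarrow> 'a \<Rightarrow> bool) \<Rightarrow> 'a \<Rightarrow> 'a \<Rightarrow> nat" where
  "gdist adj u v = (LEAST n. \<exists>p. walk adj p \<and> hd p = u \<and> last p = v \<and> length p = Suc n)"

definition geodesic :: "('a \<Rightarrow> 'a \<Rightarrow> bool) \<Rightarrow> 'a \<Rightarrow> 'a \<Rightarrow> 'a list \<Rightarrow> bool" where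
  "geodesic adj u v p \<longleftrightarrow> walk adj p \<and> hd p = u \<and> last p = v \<and> length p = Suc (gdist adj u v)"

definition subgraph :: "'a set \<Rightarrow> ('a \<Rightarrow> 'a \<Rightarrow> bool) \<Rightarrow> 'a set \<Rightarrow> ('a \<Rightarrow> 'a \<Rightarrow> bool) \<Rightarrow> bool" where
  "subgraph W F V adj \<longleftrightarrow> W \<subseteq> V \<and>
     (\<forall>u v. F u v \<longrightarrow> adj u v \<and> u \<in> W \<and> v \<in> W) \<and> (\<forall>u v. F u v \<longrightarrow> F v u)"

definition simple_loop :: "('a \<Rightarrow> 'a \<Rightarrow> bool) \<Rightarrow> 'a list \<Rightarrow> bool" where
  "simple_loop adj c \<longleftrightarrow> length c \<ge> 3 \<and> distinct c \<and> successively adj c \<and> adj (last c) (hd c)"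

definition tree_graded ::
  "'a set \<Rightarrow> ('a \<Rightarrow> 'a \<Rightarrow> bool) \<Rightarrow> 'i set \<Rightarrow> ('i \<Rightarrow> 'a set) \<Rightarrow> ('i \<Rightarrow> 'a \<Rightarrow> 'a \<Rightarrow> bool) \<Rightarrow> bool" where
  "tree_graded V adj I SV SE \<longleftrightarrow>
     simplicial_graph V adj \<and> connected_graph V adj \<and>
     (\<forall>i\<in>I. subgraph (SV i) (SE i) V adj \<and> SV i \<noteq> {} \<and> connected_graph (SV i) (SE i)) \<and>
     (\<forall>v\<in>V. \<exists>i\<in>I. v \<in> SV i) \<and>
     (\<forall>c. simple_loop adj c \<longrightarrow>
        (\<exists>i\<in>I. set c \<subseteq> SV i \<and> successively (SE i) c \<and> SE i (last c) (hd c))) \<and>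
     (\<forall>i\<in>I. \<forall>j\<in>I. i \<noteq> j \<longrightarrow>
        \<not> (SV i \<subseteq> SV j \<and> (\<forall>u v. SE i u v \<longrightarrow> SE j u v)) \<and>
        card (SV i \<inter> SV j) \<le> 1 \<and> finite (SV i \<inter> SV j))"

end

theory Submission
  imports Defs
begin

text \<open>A simple loop lies in a single piece, hence so do two paths with common endpoints that meet
  only there. Consequently pieces are induced subgraphs and convex along geodesics, the first vertex
  at which a geodesic from \<open>e\<close> enters a piece is the unique vertex of that piece closest to
  \<open>e\<close>, and if no piece contains both neighbours \<open>g!(c - 1)\<close> and \<open>g!(c + 1)\<close> of a vertex
  \<open>g!c\<close> on a geodesic \<open>g\<close> from \<open>e\<close> to \<open>x\<close>, then every geodesic from \<open>e\<close> to \<open>x\<close> has \<open>g!c\<close> at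
  position \<open>c\<close>: two geodesics differing there would bound a bigon through both neighbours.
  Cutting one geodesic from \<open>e\<close> to \<open>x\<close> greedily into maximal stretches inside single pieces,
  joined by steps of length at most one, every end of a stretch is such a cut point. So every
  geodesic from \<open>e\<close> to \<open>x\<close> passes through the same stretch ends and, by convexity, through the
  same pieces in between.\<close>

section \<open>Walks, segments and geodesics\<close>

lemma walk_iff_nth: "walk R p \<longleftrightarrow> p \<noteq> [] \<and> (\<forall>m. Suc m < length p \<longrightarrow> R (p!m) (p!Suc m))"
  by (simp add: walk_def successively_conv_nth)

lemma walk_nth: "walk R p \<Longrightarrow> Suc m < length p \<Longrightarrow> R (p!m) (p!Suc m)"
  by (simp add: walk_iff_nth)

lemma walk_take: "walk R p \<Longrightarrow> n < length p \<Longrightarrow> walk R (take (Suc n) p)"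
  by (auto simp: walk_iff_nth)

lemma walk_drop: "walk R p \<Longrightarrow> n < length p \<Longrightarrow> walk R (drop n p)"
  by (auto simp: walk_iff_nth)

lemma walk_set_subset:
  assumes "walk R q" "hd q \<in> A" "\<And>u v. R u v \<Longrightarrow> v \<in> A"
  shows "set q \<subseteq> A"
proof
  fix v assume "v \<in> set q"
  then obtain m where "m < length q" "v = q!m" by (auto simp: in_set_conv_nth)
  then show "v \<in> A"
    using assms walk_nth[OF assms(1), of "m - 1"]
    by (cases m) (auto simp: walk_def hd_conv_nth)
qed

lemma distinct_hd_neq_last: "distinct p \<Longrightarrow> 2 \<le> length p \<Longrightarrow> hd p \<noteq> last p"
  by (cases p) (auto dest: last_in_set)

lemma walk_append: "walk R p \<Longrightarrow> walk R q \<Longrightarrow> R (last p) (hd q) \<Longrightarrow> walk R (p @ q)"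
  by (auto simp: walk_def successively_append_iff)

definition segment :: "'a list \<Rightarrow> nat \<Rightarrow> nat \<Rightarrow> 'a list" where
  "segment g a b = map ((!) g) [a..<Suc b]"

lemma segment_simps:
  assumes "a \<le> b"
  shows "hd (segment g a b) = g!a" "last (segment g a b) = g!b"
    "length (segment g a b) = Suc b - a" "set (segment g a b) = (!) g ` {a..b}"
  using assms
  by (simp_all add: segment_def hd_map last_map hd_upt atLeastLessThanSuc_atLeastAtMost del: upt_Suc)

lemma nth_in_segment: "a \<le> j \<Longrightarrow> j \<le> b \<Longrightarrow> g!j \<in> set (segment g a b)"
  by (simp add: segment_simps)

lemma walk_segment:
  assumes "walk R g" "a \<le> b" "b < length g"
  shows "walk R (segment g a b)"
  using assms by (auto simp: segment_def walk_iff_nth nth_map_upt simp del: upt_Suc)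

lemma distinct_segment: "distinct g \<Longrightarrow> b < length g \<Longrightarrow> distinct (segment g a b)"
  by (simp add: segment_def distinct_map inj_on_nth)

lemma nat_last_before:
  fixes P :: "nat \<Rightarrow> bool"
  assumes "P a" "a \<le> c"
  shows "\<exists>a'. a \<le> a' \<and> a' \<le> c \<and> P a' \<and> (\<forall>j. a' < j \<and> j \<le> c \<longrightarrow> \<not> P j)"
  using assms(2)
proof (induction c)
  case (Suc c)
  show ?case
  proof (cases "P (Suc c) \<or> a = Suc c")
    case True
    then show ?thesis using assms(1) Suc.prems by (intro exI[of _ "Suc c"]) auto
  next
    case False
    with Suc obtain a' where "a \<le> a'" "a' \<le> c" "P a'" "\<forall>j. a' < j \<and> j \<le> c \<longrightarrow> \<not> P j"
      by auto
    with False show ?thesis by (intro exI[of _ a']) (auto simp: le_Suc_eq)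
  qed
qed (use assms in auto)

lemma nat_first_after:
  fixes P :: "nat \<Rightarrow> bool"
  assumes "P b" "c \<le> b"
  shows "\<exists>b'. c \<le> b' \<and> b' \<le> b \<and> P b' \<and> (\<forall>j. c \<le> j \<and> j < b' \<longrightarrow> \<not> P j)"
proof -
  obtain i where "i \<le> b - c" "\<forall>i'<i. \<not> P (c + i')" "P (c + i)"
    using ex_least_nat_le[of "\<lambda>i. P (c + i)" "b - c"] assms by auto
  moreover have "\<not> P j" if "c \<le> j" "j < c + i" for j
    using \<open>\<forall>i'<i. \<not> P (c + i')\<close>[rule_format, of "j - c"] that by simp
  ultimately show ?thesis
    using assms(2) by (intro exI[of _ "c + i"]) auto
qed

lemma nat_gap_around:
  fixes P :: "nat \<Rightarrow> bool"
  assumes "P a" "P b" "\<not> P c" "a \<le> c" "c \<le> b"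
  obtains a' b' where "a \<le> a'" "a' < c" "c < b'" "b' \<le> b" "P a'" "P b'"
    "\<forall>j. a' < j \<and> j < b' \<longrightarrow> \<not> P j"
proof -
  obtain a' where a': "a \<le> a'" "a' \<le> c" "P a'" "\<forall>j. a' < j \<and> j \<le> c \<longrightarrow> \<not> P j"
    using nat_last_before[of P a c] assms by blast
  obtain b' where b': "c \<le> b'" "b' \<le> b" "P b'" "\<forall>j. c \<le> j \<and> j < b' \<longrightarrow> \<not> P j"
    using nat_first_after[of P b c] assms by blast
  have "a' < c" "c < b'" using a' b' assms(3) by (auto simp: le_less)
  moreover have "\<forall>j. a' < j \<and> j < b' \<longrightarrow> \<not> P j"
    using a'(4) b'(4) by (metis linorder_le_cases)
  ultimately show thesis using that a' b' by blast
qed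

lemma gdist_le_length: "walk adj p \<Longrightarrow> gdist adj (hd p) (last p) \<le> length p - 1"
  unfolding gdist_def by (rule Least_le) (auto simp: walk_def)

lemma geodesic_exists: "walk adj p \<Longrightarrow> hd p = u \<Longrightarrow> last p = v \<Longrightarrow> \<exists>g. geodesic adj u v g"
  unfolding geodesic_def gdist_def
  by (rule LeastI_ex[where P = "\<lambda>n. \<exists>p. walk adj p \<and> hd p = u \<and> last p = v \<and> length p = Suc n"])
     (metis Suc_pred' length_greater_0_conv walk_def)

lemma geodesic_gdist_nth:
  assumes g: "geodesic adj u x g" and m: "m < length g"
  shows "gdist adj u (g!m) = m"
proof -
  have g_walk: "walk adj g" and g0: "g \<noteq> []" and hd_g: "hd g = u" and last_g: "last g = x"
    and len_g: "length g = Suc (gdist adj u x)"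
    using g by (auto simp: geodesic_def walk_def)
  have "hd (take (Suc m) g) = u" using hd_g by simp
  moreover have "last (take (Suc m) g) = g!m" using m by (simp add: take_Suc_conv_app_nth)
  ultimately have prefix: "walk adj (take (Suc m) g)" "hd (take (Suc m) g) = u" "last (take (Suc m) g) = g!m"
    using walk_take[OF g_walk m] by simp_all
  then have "gdist adj u (g!m) \<le> m"
    using gdist_le_length[of adj "take (Suc m) g"] m by simp
  moreover have "m \<le> gdist adj u (g!m)"
  proof -
    obtain p where p: "geodesic adj u (g!m) p"
      using geodesic_exists[OF prefix] by blast
    let ?q = "p @ drop (Suc m) g"
    have p_walk: "walk adj p" and p0: "p \<noteq> []" and last_p: "last p = g!m"
      and len_p: "length p = Suc (gdist adj u (g!m))"
      using p by (auto simp: geodesic_def walk_def)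
    have "walk adj ?q"
      using p_walk walk_drop[OF g_walk, of "Suc m"] walk_nth[OF g_walk, of m] last_p
      by (cases "Suc m < length g") (auto simp: walk_def successively_append_iff hd_drop_conv_nth)
    moreover have "hd ?q = u" using p p0 by (simp add: geodesic_def)
    moreover have "last ?q = x"
    proof (cases "Suc m < length g")
      case False
      then have "m = length g - 1" using m by simp
      then show ?thesis using last_p last_g g0 by (simp add: last_conv_nth)
    qed (use last_g in \<open>simp add: last_drop\<close>)
    ultimately have "gdist adj u x \<le> length ?q - 1"
      using gdist_le_length by metis
    then show ?thesis using len_g len_p m by simp
  qed
  ultimately show ?thesis by simp
qed

lemma geodesic_walk: "geodesic adj u x g \<Longrightarrow> walk adj g"
  by (simp add: geodesic_def)

lemma geodesic_nth_0: "geodesic adj u x g \<Longrightarrow> g!0 = u"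
  by (auto simp: geodesic_def walk_def hd_conv_nth)

lemma geodesic_nth_last: "geodesic adj u x g \<Longrightarrow> g!(length g - 1) = x"
  unfolding geodesic_def walk_def by (metis last_conv_nth)

lemma geodesic_length: "geodesic adj u x g \<Longrightarrow> length g = Suc (gdist adj u x)"
  by (simp add: geodesic_def)

lemma geodesic_nth_eq_imp_eq:
  assumes "geodesic adj u x g" "geodesic adj u y h" "m < length g" "m' < length h" "g!m = h!m'"
  shows "m = m'"
  using geodesic_gdist_nth[OF assms(1,3)] geodesic_gdist_nth[OF assms(2,4)] assms(5) by metis

lemma geodesic_distinct: "geodesic adj u x g \<Longrightarrow> distinct g"
  unfolding distinct_conv_nth using geodesic_nth_eq_imp_eq by metis

section \<open>Pieces of a tree-graded graph\<close>

locale tree_graded_graph =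
  fixes V :: "'a set" and adj :: "'a \<Rightarrow> 'a \<Rightarrow> bool"
    and I :: "'i set" and SV :: "'i \<Rightarrow> 'a set" and SE :: "'i \<Rightarrow> 'a \<Rightarrow> 'a \<Rightarrow> bool"
  assumes tree_graded: "tree_graded V adj I SV SE"
begin

lemma adj_sym: "adj u v \<Longrightarrow> adj v u"
  using tree_graded by (auto simp: tree_graded_def simplicial_graph_def)

lemma adj_irrefl: "\<not> adj u u"
  using tree_graded by (auto simp: tree_graded_def simplicial_graph_def)

lemma adj_in_V: "adj u v \<Longrightarrow> u \<in> V \<and> v \<in> V"
  using tree_graded by (auto simp: tree_graded_def simplicial_graph_def)

lemma graph_connected: "connected_graph V adj"
  using tree_graded by (auto simp: tree_graded_def)

lemma SE_imp_adj: "i \<in> I \<Longrightarrow> SE i u v \<Longrightarrow> adj u v \<and> u \<in> SV i \<and> v \<in> SV i"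
  using tree_graded by (auto simp: tree_graded_def subgraph_def)

lemma SE_sym: "i \<in> I \<Longrightarrow> SE i u v \<Longrightarrow> SE i v u"
  using tree_graded by (auto simp: tree_graded_def subgraph_def)

lemma SV_subset_V: "i \<in> I \<Longrightarrow> SV i \<subseteq> V"
  using tree_graded by (auto simp: tree_graded_def subgraph_def)

lemma piece_connected: "i \<in> I \<Longrightarrow> connected_graph (SV i) (SE i)"
  using tree_graded by (auto simp: tree_graded_def)

lemma vertex_in_piece: "v \<in> V \<Longrightarrow> \<exists>i\<in>I. v \<in> SV i"
  using tree_graded by (auto simp: tree_graded_def)

lemma simple_loop_in_piece:
  "simple_loop adj c \<Longrightarrow> \<exists>i\<in>I. set c \<subseteq> SV i \<and> successively (SE i) c \<and> SE i (last c) (hd c)"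
  using tree_graded unfolding tree_graded_def by blast

lemma piece_eqI:
  assumes "i \<in> I" "j \<in> I" "u \<noteq> v" "u \<in> SV i" "v \<in> SV i" "u \<in> SV j" "v \<in> SV j"
  shows "i = j"
proof (rule ccontr)
  assume "i \<noteq> j"
  then have "card (SV i \<inter> SV j) \<le> 1" "finite (SV i \<inter> SV j)"
    using tree_graded assms(1,2) unfolding tree_graded_def by blast+
  moreover have "{u, v} \<subseteq> SV i \<inter> SV j" using assms by auto
  ultimately have "card {u, v} \<le> 1" by (meson card_mono order_trans)
  then show False using assms(3) by simp
qed

lemma geodesic_exists_in_V:
  assumes "u \<in> V" "v \<in> V"
  obtains g where "geodesic adj u v g"
proof -
  obtain p where "walk adj p" "hd p = u" "last p = v"
    using graph_connected assms unfolding connected_graph_def by blast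
  then show thesis using geodesic_exists that by metis
qed

lemma geodesic_set_subset_V: "u \<in> V \<Longrightarrow> geodesic adj u x g \<Longrightarrow> set g \<subseteq> V"
  using walk_set_subset[of adj g V] adj_in_V by (auto simp: geodesic_def)

lemma walk_rev: "walk adj p \<Longrightarrow> walk adj (rev p)"
  by (auto simp: walk_def intro: successively_mono adj_sym)

lemma walk_SE_imp_walk: "i \<in> I \<Longrightarrow> walk (SE i) q \<Longrightarrow> walk adj q"
  unfolding walk_def using SE_imp_adj by (auto intro: successively_mono)

lemma piece_path:
  assumes i: "i \<in> I" and "u \<in> SV i" "v \<in> SV i"
  obtains q where "walk (SE i) q" "distinct q" "hd q = u" "last q = v" "set q \<subseteq> SV i"
proof -
  obtain p where "walk (SE i) p" "hd p = u" "last p = v"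
    using piece_connected[OF i] assms(2,3) unfolding connected_graph_def by blast
  then obtain q where q: "geodesic (SE i) u v q"
    using geodesic_exists by metis
  then have "walk (SE i) q" "hd q = u" "last q = v"
    by (simp_all add: geodesic_def)
  moreover have "set q \<subseteq> SV i"
    by (rule walk_set_subset[OF \<open>walk (SE i) q\<close>]) (use \<open>hd q = u\<close> assms(2) SE_imp_adj[OF i] in auto)
  ultimately show thesis using that geodesic_distinct[OF q] by blast
qed

text \<open>A path inside the piece, closed by the edge, is a simple loop unless it is that edge.\<close>
lemma piece_induced:
  assumes i: "i \<in> I" and uv: "u \<in> SV i" "v \<in> SV i" "adj u v"
  shows "SE i u v"
proof -
  obtain q where q: "walk (SE i) q" "distinct q" "hd q = v" "last q = u"
    using piece_path[OF i uv(2,1)] by blast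
  have "u \<noteq> v" using uv(3) adj_irrefl by blast
  then have len: "2 \<le> length q"
    using q by (cases q) (auto simp: walk_def Suc_le_eq split: if_splits)
  show ?thesis
  proof (cases "length q = 2")
    case True
    then have "SE i (q!0) (q!1)" using walk_nth[OF q(1), of 0] by simp
    moreover have "q!0 = v" "q!1 = u"
      using q(3,4) True by (auto simp: hd_conv_nth last_conv_nth simp flip: length_greater_0_conv)
    ultimately show ?thesis using SE_sym[OF i] by blast
  next
    case False
    then have "simple_loop adj q"
      using len q walk_SE_imp_walk[OF i q(1)] uv(3) by (auto simp: simple_loop_def walk_def)
    then obtain j where j: "j \<in> I" "set q \<subseteq> SV j" "SE j (last q) (hd q)"
      using simple_loop_in_piece by blast
    have "u \<in> SV j" "v \<in> SV j" using j(2) q(1,3,4) by (auto simp: walk_def)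
    then have "j = i" using piece_eqI[OF j(1) i \<open>u \<noteq> v\<close>] uv by blast
    then show ?thesis using j(3) q(3,4) by simp
  qed
qed

lemma paths_in_common_piece:
  assumes p: "walk adj p" "distinct p" "3 \<le> length p"
    and q: "walk adj q" "distinct q" "hd q = hd p" "last q = last p"
    and meet: "set p \<inter> set q \<subseteq> {hd p, last p}"
  shows "\<exists>i\<in>I. set p \<union> set q \<subseteq> SV i"
proof -
  have "hd p \<noteq> last p"
    using p(2,3) by (intro distinct_hd_neq_last) auto
  then have "tl q \<noteq> []"
    using q(1,3,4) by (cases q) (auto simp: walk_def)
  then obtain mid where q_eq: "q = hd p # mid @ [last p]"
    using q(1,3,4) by (metis append_butlast_last_id last_tl list.collapse walk_def)
  have q_succ: "successively adj (hd p # mid @ [last p])" and q_dist: "distinct (hd p # mid @ [last p])"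
    using q q_eq by (simp_all add: walk_def)
  let ?c = "p @ rev mid"
  have "simple_loop adj ?c"
    unfolding simple_loop_def
  proof (intro conjI)
    show "3 \<le> length ?c" using p(3) by simp
    have "set p \<inter> set mid = {}" using meet q_dist q_eq by auto
    then show "distinct ?c" using p(2) q_dist by simp
    have "successively adj mid"
      using q_succ by (simp add: successively_Cons successively_append_iff)
    then have "successively adj (rev mid)"
      by (auto intro: successively_mono adj_sym)
    moreover have "mid \<noteq> [] \<Longrightarrow> adj (last p) (last mid)"
      using q_succ by (auto simp: successively_Cons successively_append_iff intro: adj_sym)
    ultimately show "successively adj ?c"
      using p(1) by (auto simp: walk_def successively_append_iff hd_rev)
    show "adj (last ?c) (hd ?c)"
      using q_succ p(1) by (cases mid) (auto simp: walk_def last_rev intro: adj_sym)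
  qed
  then obtain i where "i \<in> I" "set ?c \<subseteq> SV i"
    using simple_loop_in_piece by blast
  moreover have "set q \<subseteq> set ?c" using q_eq p(1) by (auto simp: walk_def)
  ultimately show ?thesis by auto
qed

lemma piece_detour_length:
  assumes i: "i \<in> I" and w: "walk adj w" "distinct w"
    and ends: "hd w \<in> SV i" "last w \<in> SV i"
    and only_ends: "\<forall>v\<in>set w. v \<in> SV i \<longrightarrow> v = hd w \<or> v = last w"
  shows "length w \<le> 2"
proof (rule ccontr)
  assume "\<not> length w \<le> 2"
  then have len: "3 \<le> length w" by simp
  obtain q where q: "walk (SE i) q" "distinct q" "hd q = hd w" "last q = last w" "set q \<subseteq> SV i"
    using piece_path[OF i ends] by blast
  have "set w \<inter> set q \<subseteq> {hd w, last w}" using only_ends q(5) by auto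
  then obtain j where j: "j \<in> I" "set w \<subseteq> SV j"
    using paths_in_common_piece[OF w len walk_SE_imp_walk[OF i q(1)] q(2-4)] by blast
  have "w \<noteq> []" using len by auto
  then have w0: "w!0 = hd w" and w_last: "w!(length w - 1) = last w"
    by (simp_all add: hd_conv_nth last_conv_nth)
  have "hd w \<noteq> last w" using w(2) len by (intro distinct_hd_neq_last) auto
  moreover have "hd w \<in> SV j" "last w \<in> SV j" using j(2) \<open>w \<noteq> []\<close> by auto
  ultimately have "j = i" using piece_eqI[OF j(1) i] ends by blast
  then have "w!1 \<in> SV i" using j(2) len by auto
  then have "w!1 = w!0 \<or> w!1 = w!(length w - 1)" using only_ends len w0 w_last by auto
  moreover have "w!1 \<noteq> w!0" "w!1 \<noteq> w!(length w - 1)"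
    using w(2) len by (subst nth_eq_iff_index_eq; auto)+
  ultimately show False by blast
qed

lemma piece_convex:
  assumes i: "i \<in> I" and g: "walk adj g" "distinct g" and b: "b < length g"
    and ends: "g!a \<in> SV i" "g!b \<in> SV i" and m: "a \<le> m" "m \<le> b"
  shows "g!m \<in> SV i"
proof (rule ccontr)
  assume "g!m \<notin> SV i"
  then obtain a' b' where gap: "a' < m" "m < b'" "b' \<le> b" "g!a' \<in> SV i" "g!b' \<in> SV i"
    "\<forall>j. a' < j \<and> j < b' \<longrightarrow> g!j \<notin> SV i"
    using nat_gap_around[of "\<lambda>j. g!j \<in> SV i", OF ends _ m] by metis
  let ?w = "segment g a' b'"
  have "length ?w \<le> 2"
  proof (rule piece_detour_length[OF i])
    show "walk adj ?w" using walk_segment[OF g(1)] gap b by simp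
    show "distinct ?w" using distinct_segment[OF g(2)] gap b by simp
    show "hd ?w \<in> SV i" "last ?w \<in> SV i" using gap by (simp_all add: segment_simps)
    show "\<forall>v\<in>set ?w. v \<in> SV i \<longrightarrow> v = hd ?w \<or> v = last ?w"
      using gap by (auto simp: segment_simps le_less)
  qed
  then show False using gap by (simp add: segment_simps)
qed

section \<open>Cut points and first entry points\<close>

definition same_piece :: "'a \<Rightarrow> 'a \<Rightarrow> bool" where
  "same_piece u v \<longleftrightarrow> (\<exists>i\<in>I. u \<in> SV i \<and> v \<in> SV i)"

definition cut_point :: "'a list \<Rightarrow> nat \<Rightarrow> bool" where
  "cut_point g c \<longleftrightarrow> c = 0 \<or> c = length g - 1 \<or> \<not> same_piece (g!(c - 1)) (g!Suc c)"

lemma geodesic_bigon_in_piece: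
  assumes g: "geodesic adj e x g" and h: "geodesic adj e y h"
    and ab: "Suc a < b" "b < length g" "b < length h"
    and agree: "g!a = h!a" "g!b = h!b" and differ: "\<forall>j. a < j \<and> j < b \<longrightarrow> g!j \<noteq> h!j"
  shows "\<exists>i\<in>I. set (segment g a b) \<subseteq> SV i"
proof -
  let ?p = "segment g a b" and ?q = "segment h a b"
  have meet: "set ?p \<inter> set ?q \<subseteq> {hd ?p, last ?p}"
  proof
    fix v assume "v \<in> set ?p \<inter> set ?q"
    then obtain j j' where j: "a \<le> j" "j \<le> b" "j' \<le> b" "v = g!j" "v = h!j'"
      using ab(1) by (auto simp: segment_simps)
    then have "j = j'"
      using geodesic_nth_eq_imp_eq[OF g h, of j j'] ab by (metis le_less_trans)
    then have "j = a \<or> j = b" using j differ by (metis le_less)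
    then show "v \<in> {hd ?p, last ?p}" using j ab(1) by (auto simp: segment_simps)
  qed
  have "\<exists>i\<in>I. set ?p \<union> set ?q \<subseteq> SV i"
  proof (rule paths_in_common_piece)
    show "walk adj ?p" "walk adj ?q"
      using walk_segment[OF geodesic_walk[OF g]] walk_segment[OF geodesic_walk[OF h]] ab by simp_all
    show "distinct ?p" "distinct ?q"
      using distinct_segment[OF geodesic_distinct[OF g]] distinct_segment[OF geodesic_distinct[OF h]] ab
      by simp_all
    show "3 \<le> length ?p" using ab(1) by (simp add: segment_simps)
    show "hd ?q = hd ?p" "last ?q = last ?p" using agree ab(1) by (simp_all add: segment_simps)
  qed (use meet in blast)
  then show ?thesis by blast
qed

text \<open>Two geodesics that differ at a cut point would form a bigon through both neighbours of it.\<close>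
lemma geodesics_agree_at_cut_point:
  assumes g: "geodesic adj e x g" and h: "geodesic adj e x h"
    and c: "c < length g" "cut_point g c"
  shows "h!c = g!c"
proof (rule ccontr)
  assume differ: "h!c \<noteq> g!c"
  have len: "length h = length g" using geodesic_length[OF g] geodesic_length[OF h] by simp
  have ends: "g!0 = h!0" "g!(length g - 1) = h!(length g - 1)"
    using geodesic_nth_0[OF g] geodesic_nth_0[OF h] geodesic_nth_last[OF g] geodesic_nth_last[OF h] len
    by simp_all
  moreover have "g!c \<noteq> h!c" "c \<le> length g - 1" using differ c(1) by auto
  ultimately obtain a b where gap: "a < c" "c < b" "b \<le> length g - 1" "g!a = h!a" "g!b = h!b"
    "\<forall>j. a < j \<and> j < b \<longrightarrow> g!j \<noteq> h!j"
    using nat_gap_around[of "\<lambda>j. g!j = h!j" 0 "length g - 1" c] by (metis le0)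
  moreover have "Suc a < b" "b < length g" "b < length h" using gap(1-3) c(1) len by linarith+
  ultimately obtain i where "i \<in> I" "set (segment g a b) \<subseteq> SV i"
    using geodesic_bigon_in_piece[OF g h] by metis
  moreover have "g!(c - 1) \<in> set (segment g a b)" "g!Suc c \<in> set (segment g a b)"
    using gap by (simp_all add: nth_in_segment)
  ultimately have "same_piece (g!(c - 1)) (g!Suc c)"
    unfolding same_piece_def by blast
  moreover have "c \<noteq> 0" "c \<noteq> length g - 1" using gap by simp_all
  ultimately show False using c(2) by (simp add: cut_point_def)
qed

lemma geodesic_fork_path:
  assumes \<gamma>: "geodesic adj e y \<gamma>" and g: "geodesic adj e x g"
    and a: "a < d" "d < length \<gamma>" "a < s" "s < length g"
    and fork: "\<gamma>!a = g!a" "\<forall>j. a < j \<and> j \<le> d \<longrightarrow> \<gamma>!j \<noteq> g!j"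
  defines "w \<equiv> rev (segment \<gamma> a d) @ segment g (Suc a) s"
  shows "walk adj w" "distinct w"
proof -
  have "adj (g!a) (g!Suc a)" using walk_nth[OF geodesic_walk[OF g]] a by simp
  then show "walk adj w"
    unfolding w_def using walk_segment[OF geodesic_walk[OF \<gamma>]] walk_segment[OF geodesic_walk[OF g]] a fork
    by (intro walk_append walk_rev) (simp_all add: segment_simps last_rev)
  have "\<gamma>!j \<noteq> g!j'" if j: "a \<le> j" "j \<le> d" "Suc a \<le> j'" "j' \<le> s" for j j'
  proof
    assume eq: "\<gamma>!j = g!j'"
    have "j < length \<gamma>" "j' < length g" using j a by linarith+
    then have "j = j'" by (rule geodesic_nth_eq_imp_eq[OF \<gamma> g _ _ eq])
    with fork(2) j eq show False by auto
  qed
  then have "set (segment \<gamma> a d) \<inter> set (segment g (Suc a) s) = {}"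
    using a by (auto simp: segment_simps)
  then show "distinct w"
    unfolding w_def using distinct_segment[OF geodesic_distinct[OF \<gamma>]]
      distinct_segment[OF geodesic_distinct[OF g]] a by auto
qed

text \<open>Otherwise a geodesic to a closer vertex of the piece, followed back to where it leaves \<open>g\<close>
  and then along \<open>g\<close>, would leave the piece and return to it.\<close>
lemma first_entry_closest:
  assumes e: "e \<in> V" and g: "geodesic adj e x g" and s: "s < length g"
    and i: "i \<in> I" and entry: "g!s \<in> SV i" "\<forall>m<s. g!m \<notin> SV i"
    and v: "v \<in> SV i" "v \<noteq> g!s"
  shows "gdist adj e (g!s) < gdist adj e v"
proof (rule ccontr)
  assume "\<not> ?thesis"
  then have v_close: "gdist adj e v \<le> s" using geodesic_gdist_nth[OF g s] by simp
  obtain \<gamma> where \<gamma>: "geodesic adj e v \<gamma>"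
    using geodesic_exists_in_V[OF e] v(1) SV_subset_V[OF i] by blast
  define n where "n = length \<gamma> - 1"
  have n: "n < length \<gamma>" "n \<le> s" "\<gamma>!n = v"
    using geodesic_length[OF \<gamma>] geodesic_nth_last[OF \<gamma>] v_close by (simp_all add: n_def)
  obtain d where d: "d \<le> n" "\<gamma>!d \<in> SV i" "\<forall>j<d. \<gamma>!j \<notin> SV i"
    using ex_least_nat_le[of "\<lambda>j. \<gamma>!j \<in> SV i" n] n(3) v(1) by blast
  obtain a where a: "a \<le> d" "\<gamma>!a = g!a" "\<forall>j. a < j \<and> j \<le> d \<longrightarrow> \<gamma>!j \<noteq> g!j"
    using nat_last_before[of "\<lambda>j. \<gamma>!j = g!j" 0 d] geodesic_nth_0[OF g] geodesic_nth_0[OF \<gamma>] by auto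
  have "a < d"
  proof (rule ccontr)
    assume "\<not> a < d"
    then have "\<gamma>!d = g!d" using a by simp
    then have "d = s" using entry d(2) n(2) d(1) by (metis le_neq_implies_less order.trans)
    then show False using \<open>\<gamma>!d = g!d\<close> d(1) n v(2) by simp
  qed
  have bounds: "a < d" "d < length \<gamma>" "a < s" "s < length g" using \<open>a < d\<close> d(1) n s by simp_all
  let ?w = "rev (segment \<gamma> a d) @ segment g (Suc a) s"
  have "segment \<gamma> a d \<noteq> []" "segment g (Suc a) s \<noteq> []"
    using bounds by (simp_all add: segment_def)
  then have hd_w: "hd ?w = \<gamma>!d" and last_w: "last ?w = g!s"
    using bounds by (simp_all add: segment_simps hd_rev)
  have set_w: "set ?w = (!) \<gamma> ` {a..d} \<union> (!) g ` {Suc a..s}"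
    using segment_simps(4)[of a d \<gamma>] segment_simps(4)[of "Suc a" s g] bounds by simp
  have "length ?w \<le> 2"
  proof (rule piece_detour_length[OF i])
    show "walk adj ?w" "distinct ?w" using geodesic_fork_path[OF \<gamma> g bounds a(2,3)] by simp_all
    show "hd ?w \<in> SV i" "last ?w \<in> SV i" using hd_w last_w d(2) entry(1) by simp_all
    show "\<forall>u\<in>set ?w. u \<in> SV i \<longrightarrow> u = hd ?w \<or> u = last ?w"
      using d(3) entry(2) unfolding hd_w last_w set_w by (auto simp: le_less)
  qed
  then show False using bounds by (simp add: segment_simps)
qed

section \<open>Decomposing a geodesic along pieces\<close>

text \<open>Stretch \<open>j\<close> of \<open>g\<close> runs from position \<open>s j\<close> to \<open>t j\<close> inside piece \<open>P j\<close> (the paper's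
  \<open>g\<^sub>j\<close>), and the step from \<open>t j\<close> to \<open>s (Suc j)\<close> is the paper's link of length at most one.
  All stretch ends are cut points, which is what makes the decomposition independent of \<open>g\<close>.\<close>

definition piece_decomposition ::
  "'a list \<Rightarrow> nat \<Rightarrow> (nat \<Rightarrow> 'i) \<Rightarrow> (nat \<Rightarrow> nat) \<Rightarrow> (nat \<Rightarrow> nat) \<Rightarrow> bool" where
  "piece_decomposition g k P s t \<longleftrightarrow> t k = length g - 1 \<and>
     (\<forall>j\<le>k. P j \<in> I \<and> s j \<le> t j \<and> t j < length g \<and> g!(s j) \<in> SV (P j) \<and> g!(t j) \<in> SV (P j) \<and>
        (\<forall>m<s j. g!m \<notin> SV (P j)) \<and> cut_point g (s j) \<and> cut_point g (t j)) \<and>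
     (\<forall>j<k. s j < s (Suc j) \<and> t j \<le> s (Suc j) \<and> s (Suc j) \<le> Suc (t j))"

lemma piece_decompositionD:
  assumes "piece_decomposition g k P s t" "j \<le> k"
  shows "P j \<in> I" "s j \<le> t j" "t j < length g" "g!(s j) \<in> SV (P j)" "g!(t j) \<in> SV (P j)"
    "\<forall>m<s j. g!m \<notin> SV (P j)" "cut_point g (s j)" "cut_point g (t j)"
  using assms unfolding piece_decomposition_def by blast+

lemma piece_decomposition_Cons:
  assumes "piece_decomposition g k P s t" "p < s 0" "t0 \<le> s 0" "s 0 \<le> Suc t0"
    and "Q \<in> I" "p \<le> t0" "g!p \<in> SV Q" "g!t0 \<in> SV Q" "\<forall>m<p. g!m \<notin> SV Q"
    "cut_point g p" "cut_point g t0"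
  shows "piece_decomposition g (Suc k) (case_nat Q P) (case_nat p s) (case_nat t0 t)"
  using assms unfolding piece_decomposition_def
  by (auto simp: le_Suc_eq less_Suc_eq_0_disj split: nat.split)

text \<open>Position \<open>p\<close> may start a stretch in piece \<open>Q\<close>. The last clause makes the stretch extend
  over the edge after \<open>p\<close> whenever that edge lies in a piece.\<close>

definition stretch_start :: "'a list \<Rightarrow> nat \<Rightarrow> 'i \<Rightarrow> bool" where
  "stretch_start g p Q \<longleftrightarrow> p < length g \<and> Q \<in> I \<and> g!p \<in> SV Q \<and> (\<forall>m<p. g!m \<notin> SV Q) \<and>
     cut_point g p \<and> (Suc p < length g \<and> same_piece (g!p) (g!Suc p) \<longrightarrow> g!Suc p \<in> SV Q)"

context
  fixes g :: "'a list"
  assumes g_walk: "walk adj g" and g_distinct: "distinct g" and g_V: "set g \<subseteq> V"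
begin

lemma not_in_piece_before:
  assumes "i \<in> I" "p < length g" "g!p \<in> SV i" "g!(p - 1) \<notin> SV i" "m < p"
  shows "g!m \<notin> SV i"
proof
  assume "g!m \<in> SV i"
  then have "g!(p - 1) \<in> SV i"
    using piece_convex[OF assms(1) g_walk g_distinct assms(2) _ assms(3), of m "p - 1"] assms(5) by simp
  with assms(4) show False ..
qed

lemma cut_point_at_exit:
  assumes i: "i \<in> I" and t: "0 < t" "Suc t < length g"
    and "g!(t - 1) \<in> SV i" "g!t \<in> SV i" "g!Suc t \<notin> SV i"
  shows "cut_point g t"
proof -
  have "\<not> same_piece (g!(t - 1)) (g!Suc t)"
  proof
    assume "same_piece (g!(t - 1)) (g!Suc t)"
    then obtain j where j: "j \<in> I" "g!(t - 1) \<in> SV j" "g!Suc t \<in> SV j"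
      unfolding same_piece_def by blast
    then have "g!t \<in> SV j"
      using piece_convex[OF j(1) g_walk g_distinct t(2) j(2,3)] by simp
    moreover have "g!(t - 1) \<noteq> g!t"
      using t nth_eq_iff_index_eq[OF g_distinct, of "t - 1" t] by simp
    ultimately have "j = i" using piece_eqI[OF j(1) i] j(2) assms(4,5) by blast
    with j(3) assms(6) show False by simp
  qed
  then show ?thesis by (simp add: cut_point_def)
qed

lemma cut_point_after_bridge:
  assumes bridge: "\<not> same_piece (g!t) (g!Suc t)" and t: "Suc t < length g"
  shows "cut_point g (Suc t)"
proof (cases "Suc (Suc t) < length g")
  case True
  have "\<not> same_piece (g!t) (g!Suc (Suc t))"
  proof
    assume "same_piece (g!t) (g!Suc (Suc t))"
    then obtain j where j: "j \<in> I" "g!t \<in> SV j" "g!Suc (Suc t) \<in> SV j"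
      unfolding same_piece_def by blast
    then have "g!Suc t \<in> SV j"
      using piece_convex[OF j(1) g_walk g_distinct True j(2,3)] by simp
    with bridge j(1,2) show False unfolding same_piece_def by blast
  qed
  then show ?thesis by (simp add: cut_point_def)
next
  case False
  then have "Suc t = length g - 1" using t by simp
  then show ?thesis by (simp add: cut_point_def)
qed

lemma stretch_start_exists:
  assumes p: "p < length g" "cut_point g p"
    and fresh: "\<And>i. i \<in> I \<Longrightarrow> g!p \<in> SV i \<Longrightarrow> \<forall>m<p. g!m \<notin> SV i"
  shows "\<exists>Q. stretch_start g p Q"
proof (cases "Suc p < length g \<and> same_piece (g!p) (g!Suc p)")
  case True
  then obtain Q where "Q \<in> I" "g!p \<in> SV Q" "g!Suc p \<in> SV Q" unfolding same_piece_def by blast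
  then show ?thesis using p fresh unfolding stretch_start_def by blast
next
  case False
  obtain Q where "Q \<in> I" "g!p \<in> SV Q" using vertex_in_piece g_V p(1) by (meson nth_mem subsetD)
  then show ?thesis using p fresh False unfolding stretch_start_def by blast
qed

lemma next_stretch_start:
  assumes start: "stretch_start g p Q" and t: "p \<le> t" "Suc t < length g"
    and exit: "g!t \<in> SV Q" "g!Suc t \<notin> SV Q"
  shows "cut_point g t" "\<exists>p' Q'. p < p' \<and> t \<le> p' \<and> p' \<le> Suc t \<and> stretch_start g p' Q'"
proof -
  have Q: "Q \<in> I" "g!p \<in> SV Q" and p_cut: "cut_point g p"
    and p_edge: "Suc p < length g \<Longrightarrow> same_piece (g!p) (g!Suc p) \<Longrightarrow> g!Suc p \<in> SV Q"
    using start by (simp_all add: stretch_start_def)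
  have before_t: "g!(t - 1) \<in> SV Q" if "p < t"
    using piece_convex[OF Q(1) g_walk g_distinct _ Q(2) exit(1), of "t - 1"] that t by simp
  show t_cut: "cut_point g t"
    using p_cut cut_point_at_exit[OF Q(1) _ t(2) before_t exit] t(1) by (cases "p = t") auto
  show "\<exists>p' Q'. p < p' \<and> t \<le> p' \<and> p' \<le> Suc t \<and> stretch_start g p' Q'"
  proof (cases "same_piece (g!t) (g!Suc t)")
    case True
    then obtain Q' where Q': "Q' \<in> I" "g!t \<in> SV Q'" "g!Suc t \<in> SV Q'" unfolding same_piece_def by blast
    have "p < t" using p_edge True t exit(2) by (cases "p = t") auto
    have "g!(t - 1) \<noteq> g!t"
      using \<open>p < t\<close> t nth_eq_iff_index_eq[OF g_distinct, of "t - 1" t] by simp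
    then have "g!(t - 1) \<notin> SV Q'"
      using piece_eqI[OF Q(1) Q'(1) _ before_t[OF \<open>p < t\<close>] exit(1) _ Q'(2)] Q'(3) exit(2) by blast
    then have "\<forall>m<t. g!m \<notin> SV Q'"
      using not_in_piece_before[OF Q'(1) _ Q'(2)] t by simp
    then have "stretch_start g t Q'" using Q' t_cut t(2) by (simp add: stretch_start_def)
    then show ?thesis using \<open>p < t\<close> by (intro exI[of _ t] exI[of _ Q']) simp
  next
    case False
    have "\<forall>m<Suc t. g!m \<notin> SV i" if "i \<in> I" "g!Suc t \<in> SV i" for i
      using not_in_piece_before[OF that(1) t(2) that(2)] False that unfolding same_piece_def by auto
    then obtain Q' where "stretch_start g (Suc t) Q'"
      using stretch_start_exists[OF t(2) cut_point_after_bridge[OF False t(2)]] by blast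
    then show ?thesis using t(1) by (intro exI[of _ "Suc t"]) auto
  qed
qed

text \<open>Greedily: take the longest stretch of \<open>g\<close> in the current piece, then start the next
  stretch at its end or, across an edge lying in no piece, one step later.\<close>
lemma piece_decomposition_exists:
  "stretch_start g p Q \<Longrightarrow> \<exists>k P s t. s 0 = p \<and> piece_decomposition g k P s t"
proof (induction "length g - p" arbitrary: p Q rule: less_induct)
  case less
  have start: "p < length g" "Q \<in> I" "g!p \<in> SV Q" "\<forall>m<p. g!m \<notin> SV Q" "cut_point g p"
    using less.prems by (simp_all add: stretch_start_def)
  obtain t where t: "p \<le> t" "t \<le> length g - 1" "g!t \<in> SV Q"
    "\<forall>j. t < j \<and> j \<le> length g - 1 \<longrightarrow> g!j \<notin> SV Q"
    using nat_last_before[of "\<lambda>j. g!j \<in> SV Q" p "length g - 1"] start(1,3) by fastforce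
  show ?case
  proof (cases "t = length g - 1")
    case True
    then have "piece_decomposition g 0 (\<lambda>_. Q) (\<lambda>_. p) (\<lambda>_. t)"
      using start t by (simp add: piece_decomposition_def cut_point_def)
    then show ?thesis by (intro exI[of _ 0] exI[of _ "\<lambda>_. Q"] exI[of _ "\<lambda>_. p"] exI[of _ "\<lambda>_. t"]) simp
  next
    case False
    then have t_len: "Suc t < length g" and exit: "g!Suc t \<notin> SV Q"
      using t by auto
    have t_cut: "cut_point g t"
      using next_stretch_start(1)[OF less.prems t(1) t_len t(3) exit] .
    obtain p' Q' where p': "p < p'" "t \<le> p'" "p' \<le> Suc t" "stretch_start g p' Q'"
      using next_stretch_start(2)[OF less.prems t(1) t_len t(3) exit] by blast
    have "p' < length g" using p'(4) by (simp add: stretch_start_def)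
    then have "length g - p' < length g - p" using p'(1) by linarith
    then obtain k P s t' where dec: "s 0 = p'" "piece_decomposition g k P s t'"
      using less.hyps[OF _ p'(4)] by blast
    have "piece_decomposition g (Suc k) (case_nat Q P) (case_nat p s) (case_nat t t')"
      using p' dec start t t_cut by (intro piece_decomposition_Cons[OF dec(2)]) simp_all
    then show ?thesis
      by (intro exI[of _ "Suc k"] exI[of _ "case_nat Q P"] exI[of _ "case_nat p s"]
          exI[of _ "case_nat t t'"]) simp
  qed
qed

end

lemma piece_decomposition_distinct:
  assumes dec: "piece_decomposition g k P s t"
  shows "distinct (map P [0..<Suc k])"
proof -
  have step: "s n < s (Suc n)" if "n \<in> {..<k}" for n
    using dec that by (simp add: piece_decomposition_def)
  have s_mono: "s j1 < s j2" if "j1 < j2" "j2 \<le> k" for j1 j2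
  proof (rule lift_Suc_mono_less_ivl[of "{..<k}" s, OF step that(1)])
    show "{j1..<j2} \<subseteq> {..<k}" using that(2) by auto
  qed
  have "P j1 \<noteq> P j2" if "j1 < j2" "j2 \<le> k" for j1 j2
  proof
    assume "P j1 = P j2"
    moreover have "g!(s j1) \<in> SV (P j1)" using piece_decompositionD(4)[OF dec, of j1] that by simp
    ultimately have "g!(s j1) \<in> SV (P j2)" by simp
    moreover have "\<forall>m<s j2. g!m \<notin> SV (P j2)" using piece_decompositionD(6)[OF dec] that by simp
    ultimately show False using s_mono[OF that] by blast
  qed
  then have "inj_on P {0..<Suc k}"
    unfolding inj_on_def by (metis atLeastLessThan_iff less_Suc_eq_le linorder_neqE_nat)
  then show ?thesis by (simp add: distinct_map del: upt_Suc)
qed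

lemma piece_decomposition_transfer:
  assumes e: "e \<in> V" and g0: "geodesic adj e x g0"
    and dec: "piece_decomposition g0 k P s t" "s 0 = 0" and g: "geodesic adj e x g"
    and ids: "\<And>j. j \<le> k \<Longrightarrow> ids!j = P j" and xs: "\<And>j. j \<le> k \<Longrightarrow> xs!j = g0!(t j)"
  shows "\<exists>s t :: nat \<Rightarrow> nat.
           s 0 = 0 \<and> t k = length g - 1 \<and>
           (\<forall>j\<le>k. s j \<le> t j \<and>
              g ! (s j) \<in> SV (ids ! j) \<and>
              (\<forall>v\<in>SV (ids ! j). v \<noteq> g ! (s j) \<longrightarrow> gdist adj e (g ! (s j)) < gdist adj e v) \<and>
              g ! (t j) = xs ! j \<and>
              (\<forall>m. s j \<le> m \<and> m \<le> t j \<longrightarrow> g ! m \<in> SV (ids ! j)) \<and>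
              (\<forall>m. s j \<le> m \<and> m < t j \<longrightarrow> SE (ids ! j) (g ! m) (g ! Suc m))) \<and>
           (\<forall>j<k. t j \<le> s (Suc j) \<and> s (Suc j) \<le> Suc (t j))"
proof -
  have len: "length g = length g0" using geodesic_length[OF g] geodesic_length[OF g0] by simp
  have seg: "P j \<in> I" "s j \<le> t j" "t j < length g" "g0!(s j) \<in> SV (P j)" "g0!(t j) \<in> SV (P j)"
    "\<forall>m<s j. g0!m \<notin> SV (P j)" "cut_point g0 (s j)" "cut_point g0 (t j)" if "j \<le> k" for j
    using piece_decompositionD[OF dec(1) that] len by simp_all
  have ends: "g!(s j) = g0!(s j)" "g!(t j) = g0!(t j)" if "j \<le> k" for j
    using geodesics_agree_at_cut_point[OF g0 g] seg[OF that] len by auto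
  have inside: "g!m \<in> SV (P j)" if "j \<le> k" "s j \<le> m" "m \<le> t j" for j m
    using piece_convex[OF seg(1)[OF that(1)] geodesic_walk[OF g] geodesic_distinct[OF g] seg(3)[OF that(1)],
        of "s j" m]
      seg[OF that(1)] ends[OF that(1)] that(2,3) by simp
  have edges: "SE (P j) (g!m) (g!Suc m)" if "j \<le> k" "s j \<le> m" "m < t j" for j m
    using piece_induced[OF seg(1)[OF that(1)] inside[OF that(1,2)] inside[OF that(1)]
        walk_nth[OF geodesic_walk[OF g]]] that seg(3)[OF that(1)] by simp
  have closest: "gdist adj e (g!(s j)) < gdist adj e v" if "j \<le> k" "v \<in> SV (P j)" "v \<noteq> g!(s j)" for j v
  proof -
    have "s j < length g0" using seg(2,3)[OF that(1)] len by linarith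
    then show ?thesis
      using first_entry_closest[OF e g0 _ seg(1,4,6)[OF that(1)] that(2)] that(3) ends[OF that(1)] by simp
  qed
  have last: "t k = length g - 1" and links: "\<forall>j<k. t j \<le> s (Suc j) \<and> s (Suc j) \<le> Suc (t j)"
    using dec(1) len by (simp_all add: piece_decomposition_def)
  show ?thesis
    by (rule exI[of _ s], rule exI[of _ t],
        use dec(2) last links seg ends inside edges closest ids xs in auto)
qed

end

theorem lemma4p4:
  fixes V :: "'a set" and adj :: "'a \<Rightarrow> 'a \<Rightarrow> bool"
    and I :: "'i set" and SV :: "'i \<Rightarrow> 'a set" and SE :: "'i \<Rightarrow> 'a \<Rightarrow> 'a \<Rightarrow> bool"
    and e :: 'a
  assumes "tree_graded V adj I SV SE"
    and "e \<in> V"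
  shows "\<forall>x\<in>V. \<exists>(ids :: 'i list) (xs :: 'a list) (k :: nat).
           length ids = Suc k \<and> length xs = Suc k \<and> distinct ids \<and> set ids \<subseteq> I \<and>
           xs ! k = x \<and>
           (\<forall>g. geodesic adj e x g \<longrightarrow>
              (\<exists>s t :: nat \<Rightarrow> nat.
                 s 0 = 0 \<and> t k = length g - 1 \<and>
                 (\<forall>j\<le>k. s j \<le> t j \<and>
                    g ! (s j) \<in> SV (ids ! j) \<and>
                    (\<forall>v\<in>SV (ids ! j). v \<noteq> g ! (s j) \<longrightarrow> gdist adj e (g ! (s j)) < gdist adj e v) \<and>
                    g ! (t j) = xs ! j \<and>
                    (\<forall>m. s j \<le> m \<and> m \<le> t j \<longrightarrow> g ! m \<in> SV (ids ! j)) \<and>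
                    (\<forall>m. s j \<le> m \<and> m < t j \<longrightarrow> SE (ids ! j) (g ! m) (g ! Suc m))) \<and>
                 (\<forall>j<k. t j \<le> s (Suc j) \<and> s (Suc j) \<le> Suc (t j))))"
proof -
  interpret tree_graded_graph V adj I SV SE by (rule tree_graded_graph.intro) fact
  show ?thesis
    apply (rule ballI)
    subgoal for x
    proof -
      assume "x \<in> V"
      then obtain g0 where g0: "geodesic adj e x g0" using geodesic_exists_in_V[OF assms(2)] by blast
      note g0_path = geodesic_walk[OF g0] geodesic_distinct[OF g0] geodesic_set_subset_V[OF assms(2) g0]
      obtain Q where "stretch_start g0 0 Q"
        using stretch_start_exists[OF g0_path, of 0] geodesic_length[OF g0] by (auto simp: cut_point_def)
      then obtain k P s t where dec: "s 0 = 0" "piece_decomposition g0 k P s t"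
        using piece_decomposition_exists[OF g0_path] by blast
      let ?ids = "map P [0..<Suc k]" and ?xs = "map (\<lambda>j. g0!(t j)) [0..<Suc k]"
      have ids: "?ids!j = P j" and xs: "?xs!j = g0!(t j)" if "j \<le> k" for j
        using that by (simp_all add: nth_map_upt del: upt_Suc)
      have "?xs!k = x"
        using xs[of k] dec(2) geodesic_nth_last[OF g0] by (simp add: piece_decomposition_def)
      moreover have "set ?ids \<subseteq> I"
        using piece_decompositionD(1)[OF dec(2)] by (auto simp del: upt_Suc)
      moreover note piece_decomposition_distinct[OF dec(2)]
        piece_decomposition_transfer[OF assms(2) g0 dec(2,1) _ ids xs]
      ultimately show ?thesis
        by (intro exI[of _ ?ids] exI[of _ ?xs] exI[of _ k]) auto
    qed
    done
qed

end
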